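(* Let $G,H,K$ be graphs. (1) $G\mid(G\otimes H)$ and $H\mid(G\otimes H)$. (2) If $G\mid H$ and $H\mid K$, then $G\mid K$. (3) If $G\mid H$ and $H\mid G$, then $G$ and $H$ are isomorphic.
   Context: A weight function on finite $U$ is $\alpha:U\times U\to\mathbb{R}$, $\alpha\ge0$, symmetric, summing to $1$; degree $p(u)=\sum_{u'}\alpha(u,u')$; a graph is $(U,\alpha)$. For $G=(U,\alpha)$, $H=(V,\beta)$, the tensor product is $G\otimes H=(U\times V,\alpha\otimes\beta)$ with $(\alpha\otimes\beta)((u,v),(u',v'))=\alpha(u,u')\beta(v,v')$. For graphs $G=(U,\alpha)$, $H=(V,\beta)$ with degrees $p,q$, $H\mid G$ ($H$ is a factor of $G$) means there is a surjective $\phi:U\to V$ with (i) $q(v)=\sum_{u\in\phi^{-1}(v)}p(u)$ for all $v$, and (ii) $q(v)\sum_{u'\in\phi^{-1}(v')}\alpha(u,u')=p(u)\beta(v,v')$ for all $v,v'\in V$, $u\in\phi^{-1}(v)$. $G$ and $H$ are isomorphic if there is a bijection $f:U\to V$ with $\alpha(u,u')=\beta(f(u),f(u'))$ for all $u,u'$. *)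

theory Defs
  imports Complex_Main
begin

text \<open>A graph is a pair (U, alpha) of a finite vertex set and a weight function;
  the weight function is only relevant on U x U.\<close>
type_synonym 'a graph = "'a set \<times> ('a \<Rightarrow> 'a \<Rightarrow> real)"

definition is_graph :: "'a graph \<Rightarrow> bool" where
  "is_graph G \<longleftrightarrow> finite (fst G)
     \<and> (\<forall>u\<in>fst G. \<forall>u'\<in>fst G. snd G u u' \<ge> 0 \<and> snd G u u' = snd G u' u)
     \<and> (\<Sum>u\<in>fst G. \<Sum>u'\<in>fst G. snd G u u') = 1"

definition deg :: "'a graph \<Rightarrow> 'a \<Rightarrow> real" where
  "deg G u = (\<Sum>u'\<in>fst G. snd G u u')"

definition tensor :: "'a graph \<Rightarrow> 'b graph \<Rightarrow> ('a \<times> 'b) graph" where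
  "tensor G H = (fst G \<times> fst H,
     \<lambda>(u, v) (u', v'). snd G u u' * snd H v v')"

definition graph_dvd :: "'b graph \<Rightarrow> 'a graph \<Rightarrow> bool" where
  "graph_dvd H G \<longleftrightarrow> (\<exists>\<phi>. \<phi> ` fst G = fst H
     \<and> (\<forall>v\<in>fst H. deg H v = (\<Sum>u\<in>{u\<in>fst G. \<phi> u = v}. deg G u))
     \<and> (\<forall>v\<in>fst H. \<forall>v'\<in>fst H. \<forall>u\<in>fst G. \<phi> u = v \<longrightarrow>
          deg H v * (\<Sum>u'\<in>{u'\<in>fst G. \<phi> u' = v'}. snd G u u') = deg G u * snd H v v'))"

definition graph_iso :: "'a graph \<Rightarrow> 'b graph \<Rightarrow> bool" where
  "graph_iso G H \<longleftrightarrow> (\<exists>f. bij_betw f (fst G) (fst H)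
     \<and> (\<forall>u\<in>fst G. \<forall>u'\<in>fst G. snd G u u' = snd H (f u) (f u')))"

end

theory Submission
  imports Defs
begin

text \<open>
  A factor map \<phi> of G onto H, the map in the definition of H | G, pushes the degree
  distribution of G forward to that of H and, at each vertex u, the edge distribution of u
  forward to that of \<phi> u, up to rescaling by the degrees. The projections of a tensor product
  are factor maps because the weights factorise, and the second projection is the first one
  composed with the swap isomorphism. Factor maps compose fibrewise; at a vertex of degree zero
  the rescaling cannot be undone, but there all weights vanish. If G | H and H | G, the vertex
  sets have equal size, so a factor map of G onto H is injective; it then preserves degrees,
  and hence weights.
\<close>

lemma is_graph_finite: "is_graph G \<Longrightarrow> finite (fst G)"
  by (simp add: is_graph_def)

lemma is_graph_nonempty: "is_graph G \<Longrightarrow> fst G \<noteq> {}"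
  by (auto simp: is_graph_def)

lemma sum_deg: "is_graph G \<Longrightarrow> (\<Sum>u\<in>fst G. deg G u) = 1"
  by (simp add: is_graph_def deg_def)

lemma deg_nonneg: "is_graph G \<Longrightarrow> u \<in> fst G \<Longrightarrow> deg G u \<ge> 0"
  unfolding is_graph_def deg_def by (auto intro: sum_nonneg)

lemma weight_eq_0_if_deg_eq_0:
  assumes "is_graph G" "u \<in> fst G" "u' \<in> fst G" "deg G u = 0"
  shows "snd G u u' = 0"
  using assms sum_nonneg_eq_0_iff[of "fst G" "snd G u"] unfolding is_graph_def deg_def by blast

definition factor_map :: "('a \<Rightarrow> 'b) \<Rightarrow> 'a graph \<Rightarrow> 'b graph \<Rightarrow> bool" where
  "factor_map \<phi> G H \<longleftrightarrow> \<phi> ` fst G = fst H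
     \<and> (\<forall>v\<in>fst H. deg H v = (\<Sum>u\<in>{u\<in>fst G. \<phi> u = v}. deg G u))
     \<and> (\<forall>u\<in>fst G. \<forall>v'\<in>fst H.
          deg H (\<phi> u) * (\<Sum>u'\<in>{u'\<in>fst G. \<phi> u' = v'}. snd G u u') = deg G u * snd H (\<phi> u) v')"

lemma graph_dvd_iff_factor_map: "graph_dvd H G \<longleftrightarrow> (\<exists>\<phi>. factor_map \<phi> G H)"
  unfolding graph_dvd_def factor_map_def by blast

lemma factor_map_image: "factor_map \<phi> G H \<Longrightarrow> \<phi> ` fst G = fst H"
  by (simp add: factor_map_def)

lemma factor_map_deg:
  "factor_map \<phi> G H \<Longrightarrow> v \<in> fst H \<Longrightarrow> deg H v = (\<Sum>u\<in>{u\<in>fst G. \<phi> u = v}. deg G u)"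
  by (simp add: factor_map_def)

lemma factor_map_weight:
  "factor_map \<phi> G H \<Longrightarrow> u \<in> fst G \<Longrightarrow> v' \<in> fst H \<Longrightarrow>
    deg H (\<phi> u) * (\<Sum>u'\<in>{u'\<in>fst G. \<phi> u' = v'}. snd G u u') = deg G u * snd H (\<phi> u) v'"
  by (simp add: factor_map_def)

lemma fst_tensor [simp]: "fst (tensor G H) = fst G \<times> fst H"
  by (simp add: tensor_def)

lemma snd_tensor [simp]: "snd (tensor G H) (u, v) (u', v') = snd G u u' * snd H v v'"
  by (simp add: tensor_def)

lemma deg_tensor:
  assumes "finite (fst G)" "finite (fst H)"
  shows "deg (tensor G H) (u, v) = deg G u * deg H v"
  using assms by (simp add: deg_def sum.cartesian_product' sum_product)

lemma is_graph_tensor: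
  assumes "is_graph G" "is_graph H"
  shows "is_graph (tensor G H)"
proof -
  have "(\<Sum>x\<in>fst (tensor G H). \<Sum>y\<in>fst (tensor G H). snd (tensor G H) x y)
      = (\<Sum>x\<in>fst G \<times> fst H. deg (tensor G H) x)"
    by (simp add: deg_def)
  also have "\<dots> = (\<Sum>u\<in>fst G. deg G u) * (\<Sum>v\<in>fst H. deg H v)"
    using assms by (simp add: is_graph_finite deg_tensor sum.cartesian_product' sum_product)
  also have "\<dots> = 1"
    using assms by (simp add: sum_deg)
  moreover have "snd (tensor G H) x y \<ge> 0 \<and> snd (tensor G H) x y = snd (tensor G H) y x"
    if "x \<in> fst (tensor G H)" "y \<in> fst (tensor G H)" for x y
    using assms that unfolding is_graph_def by (cases x, cases y) auto
  ultimately show ?thesis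
    using is_graph_finite[OF assms(1)] is_graph_finite[OF assms(2)] unfolding is_graph_def by simp
qed

lemma factor_map_fst_tensor:
  assumes "finite (fst G)" "is_graph H"
  shows "factor_map fst (tensor G H) G"
  unfolding factor_map_def
proof (intro conjI ballI)
  have fiber: "{x \<in> fst (tensor G H). fst x = u} = {u} \<times> fst H" if "u \<in> fst G" for u
    using that by auto
  have fH: "finite (fst H)"
    using assms(2) by (rule is_graph_finite)
  show "fst ` fst (tensor G H) = fst G"
    using is_graph_nonempty[OF assms(2)] by auto
  show "deg G u = (\<Sum>x\<in>{x \<in> fst (tensor G H). fst x = u}. deg (tensor G H) x)"
    if "u \<in> fst G" for u
    using assms unfolding fiber[OF that]
    by (simp add: sum.cartesian_product' deg_tensor fH sum_deg flip: sum_distrib_left)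
  fix x u' assume "x \<in> fst (tensor G H)" and u': "u' \<in> fst G"
  obtain u v where x: "x = (u, v)"
    by (cases x)
  have "(\<Sum>y\<in>{y \<in> fst (tensor G H). fst y = u'}. snd (tensor G H) x y) = snd G u u' * deg H v"
    unfolding fiber[OF u']
    by (simp add: x sum.cartesian_product' deg_def sum_distrib_left)
  then show "deg G (fst x) * (\<Sum>y\<in>{y \<in> fst (tensor G H). fst y = u'}. snd (tensor G H) x y)
      = deg (tensor G H) x * snd G (fst x) u'"
    using assms by (simp add: x deg_tensor fH)
qed

lemma graph_dvd_tensor_left:
  assumes "is_graph G" "is_graph H"
  shows "graph_dvd G (tensor G H)"
  using factor_map_fst_tensor[OF is_graph_finite[OF assms(1)] assms(2)]
  by (auto simp: graph_dvd_iff_factor_map)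

lemma graph_iso_imp_dvd:
  assumes "graph_iso G H"
  shows "graph_dvd H G"
proof -
  obtain f where bij: "bij_betw f (fst G) (fst H)"
    and weight: "\<forall>u\<in>fst G. \<forall>u'\<in>fst G. snd G u u' = snd H (f u) (f u')"
    using assms unfolding graph_iso_def by blast
  have inj: "inj_on f (fst G)" and img: "f ` fst G = fst H"
    using bij by (simp_all add: bij_betw_def)
  have fiber: "{u' \<in> fst G. f u' = f u} = {u}" if "u \<in> fst G" for u
    using inj that by (auto dest: inj_onD)
  have deg: "deg H (f u) = deg G u" if "u \<in> fst G" for u
  proof -
    have "deg H (f u) = (\<Sum>u'\<in>fst G. snd H (f u) (f u'))"
      unfolding deg_def img[symmetric] by (rule sum.reindex[OF inj, unfolded comp_def])
    also have "\<dots> = deg G u"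
      unfolding deg_def using weight that by simp
    finally show ?thesis .
  qed
  have "factor_map f G H"
    unfolding factor_map_def
  proof (intro conjI ballI)
    show "f ` fst G = fst H"
      by (fact img)
    show "deg H v = (\<Sum>u\<in>{u \<in> fst G. f u = v}. deg G u)" if v: "v \<in> fst H" for v
    proof -
      obtain u where "u \<in> fst G" "v = f u"
        using v unfolding img[symmetric] by blast
      then show ?thesis
        using fiber deg by simp
    qed
    show "deg H (f u) * (\<Sum>u'\<in>{u' \<in> fst G. f u' = v'}. snd G u u') = deg G u * snd H (f u) v'"
      if u: "u \<in> fst G" and v': "v' \<in> fst H" for u v'
    proof -
      obtain u' where "u' \<in> fst G" "v' = f u'"
        using v' unfolding img[symmetric] by blast
      then show ?thesis
        using u fiber deg weight by simp
    qed
  qed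
  then show ?thesis
    by (auto simp: graph_dvd_iff_factor_map)
qed

lemma graph_iso_tensor_swap: "graph_iso (tensor G H) (tensor H G)"
  unfolding graph_iso_def
proof (intro exI[of _ prod.swap] conjI ballI)
  show "bij_betw prod.swap (fst (tensor G H)) (fst (tensor H G))"
    by (auto intro: bij_betw_byWitness[where f' = prod.swap])
  show "snd (tensor G H) x y = snd (tensor H G) (prod.swap x) (prod.swap y)" for x y
    by (cases x, cases y) (simp add: mult.commute)
qed

lemma sum_fiber_comp:
  assumes "finite A"
  shows "(\<Sum>x\<in>{x \<in> A. g (f x) = z}. h x) = (\<Sum>y\<in>{y \<in> f ` A. g y = z}. \<Sum>x\<in>{x \<in> A. f x = y}. h x)"
proof -
  have "(\<Sum>x\<in>{x \<in> A. g (f x) = z}. h x)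
      = (\<Sum>y\<in>{y \<in> f ` A. g y = z}. \<Sum>x\<in>{x \<in> {x \<in> A. g (f x) = z}. f x = y}. h x)"
    by (rule sum.group[symmetric]) (use assms in auto)
  also have "\<dots> = (\<Sum>y\<in>{y \<in> f ` A. g y = z}. \<Sum>x\<in>{x \<in> A. f x = y}. h x)"
    by (rule sum.cong) (auto intro!: sum.cong)
  finally show ?thesis .
qed

lemma factor_map_deg_le:
  assumes "is_graph G" "factor_map \<phi> G H" "u \<in> fst G"
  shows "deg G u \<le> deg H (\<phi> u)"
proof -
  have "\<phi> u \<in> fst H"
    using assms(2,3) factor_map_image by blast
  then have "deg H (\<phi> u) = (\<Sum>u'\<in>{u' \<in> fst G. \<phi> u' = \<phi> u}. deg G u')"
    by (rule factor_map_deg[OF assms(2)])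
  also have "deg G u \<le> \<dots>"
    using assms by (intro member_le_sum) (auto simp: deg_nonneg is_graph_finite)
  finally show ?thesis .
qed

lemma factor_map_comp:
  assumes K: "is_graph K" and \<psi>: "factor_map \<psi> K H" and \<phi>: "factor_map \<phi> H G"
  shows "factor_map (\<phi> \<circ> \<psi>) K G"
  unfolding factor_map_def
proof (intro conjI ballI)
  have H: "fst H = \<psi> ` fst K"
    using factor_map_image[OF \<psi>] by simp
  have fK: "finite (fst K)"
    using K by (rule is_graph_finite)
  have fiber_sum: "(\<Sum>w\<in>{w \<in> fst K. (\<phi> \<circ> \<psi>) w = v}. f w)
      = (\<Sum>u\<in>{u \<in> fst H. \<phi> u = v}. \<Sum>w\<in>{w \<in> fst K. \<psi> w = u}. f w)" for f v
    unfolding H using sum_fiber_comp[OF fK] by simp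
  show "(\<phi> \<circ> \<psi>) ` fst K = fst G"
    using factor_map_image[OF \<phi>] H by (simp add: image_comp)
  show "deg G v = (\<Sum>w\<in>{w \<in> fst K. (\<phi> \<circ> \<psi>) w = v}. deg K w)" if "v \<in> fst G" for v
    unfolding fiber_sum using factor_map_deg[OF \<phi> that] factor_map_deg[OF \<psi>]
    by (auto intro!: sum.cong)
  fix w v' assume w: "w \<in> fst K" and v': "v' \<in> fst G"
  define u where "u = \<psi> w"
  have u: "u \<in> fst H"
    using w H by (simp add: u_def)
  define S where "S = (\<Sum>w'\<in>{w' \<in> fst K. (\<phi> \<circ> \<psi>) w' = v'}. snd K w w')"
  show "deg G ((\<phi> \<circ> \<psi>) w) * S = deg K w * snd G ((\<phi> \<circ> \<psi>) w) v'"
  proof (cases "deg H u = 0")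
    case True
    then have "deg K w = 0"
      using factor_map_deg_le[OF K \<psi> w] deg_nonneg[OF K w] by (simp add: u_def)
    then have "S = 0"
      unfolding S_def using weight_eq_0_if_deg_eq_0[OF K w] by (auto intro: sum.neutral)
    with \<open>deg K w = 0\<close> show ?thesis
      by simp
  next
    case False
    have "deg H u * (deg G (\<phi> u) * S)
        = deg G (\<phi> u) * (\<Sum>u'\<in>{u' \<in> fst H. \<phi> u' = v'}.
            deg H u * (\<Sum>w'\<in>{w' \<in> fst K. \<psi> w' = u'}. snd K w w'))"
      unfolding S_def fiber_sum by (simp add: sum_distrib_left mult.left_commute)
    also have "\<dots> = deg G (\<phi> u) * (\<Sum>u'\<in>{u' \<in> fst H. \<phi> u' = v'}. deg K w * snd H u u')"
      using factor_map_weight[OF \<psi> w] by (simp add: u_def)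
    also have "\<dots> = deg K w * (deg G (\<phi> u) * (\<Sum>u'\<in>{u' \<in> fst H. \<phi> u' = v'}. snd H u u'))"
      by (simp add: sum_distrib_left mult.left_commute)
    also have "\<dots> = deg H u * (deg K w * snd G (\<phi> u) v')"
      using factor_map_weight[OF \<phi> u v'] by simp
    finally show ?thesis
      using False by (simp add: u_def)
  qed
qed

lemma graph_dvd_trans:
  assumes "is_graph K" "graph_dvd G H" "graph_dvd H K"
  shows "graph_dvd G K"
  using assms factor_map_comp by (meson graph_dvd_iff_factor_map)

lemma graph_iso_if_inj_factor_map:
  assumes G: "is_graph G" and H: "is_graph H" and f: "factor_map f G H" and inj: "inj_on f (fst G)"
  shows "graph_iso G H"
  unfolding graph_iso_def
proof (intro exI[of _ f] conjI ballI)
  show "bij_betw f (fst G) (fst H)"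
    using inj factor_map_image[OF f] by (simp add: bij_betw_def)
  have fiber: "{u' \<in> fst G. f u' = f u} = {u}" if "u \<in> fst G" for u
    using inj that by (auto dest: inj_onD)
  fix u u' assume u: "u \<in> fst G" and u': "u' \<in> fst G"
  have fu: "f u \<in> fst H" and fu': "f u' \<in> fst H"
    using u u' factor_map_image[OF f] by auto
  have deg: "deg H (f u) = deg G u"
    using factor_map_deg[OF f fu] fiber[OF u] by simp
  have weight: "deg G u * snd G u u' = deg G u * snd H (f u) (f u')"
    using factor_map_weight[OF f u fu'] fiber[OF u'] deg by simp
  show "snd G u u' = snd H (f u) (f u')"
  proof (cases "deg G u = 0")
    case True
    then show ?thesis
      using weight_eq_0_if_deg_eq_0[OF G u u'] weight_eq_0_if_deg_eq_0[OF H fu fu'] deg by simp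
  next
    case False
    then show ?thesis
      using weight by simp
  qed
qed

lemma graph_dvd_antisym:
  assumes G: "is_graph G" and H: "is_graph H" and "graph_dvd G H" "graph_dvd H G"
  shows "graph_iso G H"
proof -
  obtain \<phi> f where \<phi>: "factor_map \<phi> H G" and f: "factor_map f G H"
    using assms(3,4) by (auto simp: graph_dvd_iff_factor_map)
  have "card (fst G) \<le> card (fst H)"
    unfolding factor_map_image[OF \<phi>, symmetric] by (rule card_image_le[OF is_graph_finite[OF H]])
  moreover have "card (fst H) \<le> card (fst G)"
    unfolding factor_map_image[OF f, symmetric] by (rule card_image_le[OF is_graph_finite[OF G]])
  ultimately have "inj_on f (fst G)"
    by (intro eq_card_imp_inj_on[OF is_graph_finite[OF G]]) (simp add: factor_map_image[OF f])
  with G H f show ?thesis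
    by (rule graph_iso_if_inj_factor_map)
qed

lemma graph_dvd_tensor_right:
  assumes "is_graph G" "is_graph H"
  shows "graph_dvd H (tensor G H)"
proof -
  have "graph_dvd H (tensor H G)"
    using assms by (simp add: graph_dvd_tensor_left)
  moreover have "graph_dvd (tensor H G) (tensor G H)"
    by (rule graph_iso_imp_dvd[OF graph_iso_tensor_swap])
  ultimately show ?thesis
    using is_graph_tensor[OF assms] by (blast intro: graph_dvd_trans)
qed

theorem proposition4p3:
  fixes G :: "'a graph" and H :: "'b graph" and K :: "'c graph"
  assumes "is_graph G" and "is_graph H" and "is_graph K"
  shows "(graph_dvd G (tensor G H) \<and> graph_dvd H (tensor G H))
    \<and> (graph_dvd G H \<and> graph_dvd H K \<longrightarrow> graph_dvd G K)
    \<and> (graph_dvd G H \<and> graph_dvd H G \<longrightarrow> graph_iso G H)"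
  using assms graph_dvd_tensor_left graph_dvd_tensor_right graph_dvd_trans graph_dvd_antisym
  by blast

end
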